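(* Let $\mathcal T=(G,\mathbf T^{(1)},\dots,\mathbf T^{(n)})$ be a tensor network with contraction $\mathbf T\neq 0$. Then its absolute condition number is $\kappa_a(\mathcal T)=\max_{1\le i\le n}\|M_{\mathbf T^{(i)}}\|_2$ and its relative condition number is $\kappa_r(\mathcal T)=\frac{\sum_{i=1}^n\|\mathbf T^{(i)}\|_F}{\|\mathbf T\|_F}\max_{1\le i\le n}\|M_{\mathbf T^{(i)}}\|_2$.
   Context: Tensor network setup: A tensor network $\mathcal T=(G,\mathbf T^{(1)},\dots,\mathbf T^{(n)})$ consists of a multigraph $G$ with vertices $v_1,\dots,v_n$, whose edges are either edges between distinct vertices (contracted legs) or self-loops (uncontracted legs), each edge having a dimension, and tensors $\mathbf T^{(j)}$ at $v_j$ with one mode per incident edge. Its contraction $\mathbf T=\mathscr T_G(\mathbf T^{(1)},\dots,\mathbf T^{(n)})$ is obtained by summing over all contracted-edge indices the product of the entries of all $\mathbf T^{(j)}$; it is a tensor indexed by the uncontracted legs and is multilinear in the $\mathbf T^{(j)}$. The environment matrix $M_{\mathbf T^{(j)}}$ of site $j$ is the matrix of the linear map $X\mapsto\mathrm{vec}(\mathscr T_G(\mathbf T^{(1)},\dots,\mathbf T^{(j-1)},X,\mathbf T^{(j+1)},\dots,\mathbf T^{(n)}))$ acting on $\mathrm{vec}(X)$; thus $\mathrm{vec}(\mathbf T)=M_{\mathbf T^{(j)}}\mathrm{vec}(\mathbf T^{(j)})$. A sitewise perturbation is a tuple $\delta=(\delta^{(i)})_{i=1}^n$ of tensors with $\delta^{(i)}$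 of the same shape as $\mathbf T^{(i)}$; the perturbed tensor is $\hat{\mathbf T}=\mathscr T_G(\mathbf T^{(1)}+\delta^{(1)},\dots,\mathbf T^{(n)}+\delta^{(n)})$, the absolute error is $\mathscr E_a(\mathcal T,\delta)=\|\hat{\mathbf T}-\mathbf T\|_F$ and the relative error is $\mathscr E_r(\mathcal T,\delta)=\|\hat{\mathbf T}-\mathbf T\|_F/\|\mathbf T\|_F$. Here $\|\cdot\|_F$ is the Frobenius norm and $\|\cdot\|_2$ the spectral norm. Condition numbers: with $S_\epsilon=\{\delta:\sum_i\|\delta^{(i)}\|_F\le\epsilon\}$, $\kappa_a(\mathcal T)=\lim_{\epsilon\to0^+}\sup_{\delta\in S_\epsilon}\mathscr E_a(\mathcal T,\delta)/\epsilon$ and $\kappa_r(\mathcal T)=\frac{\sum_i\|\mathbf T^{(i)}\|_F}{\|\mathbf T\|_F}\kappa_a(\mathcal T)$. *)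

theory Defs
  imports Complex_Main "Jordan_Normal_Form.Matrix"
begin

text \<open>Multigraph of a tensor network: vertices 0..<nverts, a finite edge set,
  each edge with its two endpoints (equal endpoints = self-loop = uncontracted leg)
  and a dimension.\<close>
record 'e tn_graph =
  nverts :: nat
  edges :: "'e set"
  ends :: "'e \<Rightarrow> nat \<times> nat"
  dim :: "'e \<Rightarrow> nat"

text \<open>A tensor with modes indexed by an edge set S is a real function on index
  assignments; only assignments in idx G S matter (and we require it to be 0 elsewhere).\<close>
type_synonym 'e tensor = "('e \<Rightarrow> nat) \<Rightarrow> real"

definition incident :: "'e tn_graph \<Rightarrow> nat \<Rightarrow> 'e set" where
  "incident G j = {e \<in> edges G. fst (ends G e) = j \<or> snd (ends G e) = j}"

definition open_legs :: "'e tn_graph \<Rightarrow> 'e set" where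
  "open_legs G = {e \<in> edges G. fst (ends G e) = snd (ends G e)}"

definition contracted :: "'e tn_graph \<Rightarrow> 'e set" where
  "contracted G = {e \<in> edges G. fst (ends G e) \<noteq> snd (ends G e)}"

definition idx :: "'e tn_graph \<Rightarrow> 'e set \<Rightarrow> ('e \<Rightarrow> nat) set" where
  "idx G S = {\<alpha>. (\<forall>e\<in>S. \<alpha> e < dim G e) \<and> (\<forall>e. e \<notin> S \<longrightarrow> \<alpha> e = 0)}"

definition is_tensor :: "'e tn_graph \<Rightarrow> 'e set \<Rightarrow> 'e tensor \<Rightarrow> bool" where
  "is_tensor G S X \<longleftrightarrow> (\<forall>\<alpha>. \<alpha> \<notin> idx G S \<longrightarrow> X \<alpha> = 0)"

definition restrict_idx :: "'e set \<Rightarrow> ('e \<Rightarrow> nat) \<Rightarrow> ('e \<Rightarrow> nat)" where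
  "restrict_idx S \<alpha> = (\<lambda>e. if e \<in> S then \<alpha> e else 0)"

definition tnet :: "'e tn_graph \<Rightarrow> (nat \<Rightarrow> 'e tensor) \<Rightarrow> bool" where
  "tnet G Ts \<longleftrightarrow> 0 < nverts G \<and> finite (edges G)
     \<and> (\<forall>e\<in>edges G. fst (ends G e) < nverts G \<and> snd (ends G e) < nverts G \<and> 0 < dim G e)
     \<and> (\<forall>j<nverts G. is_tensor G (incident G j) (Ts j))"

definition contract :: "'e tn_graph \<Rightarrow> (nat \<Rightarrow> 'e tensor) \<Rightarrow> 'e tensor" where
  "contract G Ts = (\<lambda>\<beta>. if \<beta> \<in> idx G (open_legs G) then
      (\<Sum>\<gamma>\<in>idx G (contracted G).
          \<Prod>j<nverts G. Ts j (restrict_idx (incident G j)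
                (\<lambda>e. if e \<in> open_legs G then \<beta> e else \<gamma> e)))
    else 0)"

definition fnorm :: "'e tn_graph \<Rightarrow> 'e set \<Rightarrow> 'e tensor \<Rightarrow> real" where
  "fnorm G S X = sqrt (\<Sum>\<alpha>\<in>idx G S. (X \<alpha>)\<^sup>2)"

definition perturbations :: "'e tn_graph \<Rightarrow> (nat \<Rightarrow> 'e tensor) set" where
  "perturbations G = {\<delta>. \<forall>i<nverts G. is_tensor G (incident G i) (\<delta> i)}"

definition abs_err :: "'e tn_graph \<Rightarrow> (nat \<Rightarrow> 'e tensor) \<Rightarrow> (nat \<Rightarrow> 'e tensor) \<Rightarrow> real" where
  "abs_err G Ts \<delta> = fnorm G (open_legs G)
      (\<lambda>\<beta>. contract G (\<lambda>i \<alpha>. Ts i \<alpha> + \<delta> i \<alpha>) \<beta> - contract G Ts \<beta>)"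

definition rel_err :: "'e tn_graph \<Rightarrow> (nat \<Rightarrow> 'e tensor) \<Rightarrow> (nat \<Rightarrow> 'e tensor) \<Rightarrow> real" where
  "rel_err G Ts \<delta> = abs_err G Ts \<delta> / fnorm G (open_legs G) (contract G Ts)"

definition S_eps :: "'e tn_graph \<Rightarrow> real \<Rightarrow> (nat \<Rightarrow> 'e tensor) set" where
  "S_eps G \<epsilon> = {\<delta> \<in> perturbations G. (\<Sum>i<nverts G. fnorm G (incident G i) (\<delta> i)) \<le> \<epsilon>}"

definition kappa_a :: "'e tn_graph \<Rightarrow> (nat \<Rightarrow> 'e tensor) \<Rightarrow> real" where
  "kappa_a G Ts = Lim (at_right 0) (\<lambda>\<epsilon>. SUP \<delta>\<in>S_eps G \<epsilon>. abs_err G Ts \<delta> / \<epsilon>)"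

definition kappa_r :: "'e tn_graph \<Rightarrow> (nat \<Rightarrow> 'e tensor) \<Rightarrow> real" where
  "kappa_r G Ts = (\<Sum>i<nverts G. fnorm G (incident G i) (Ts i))
                    / fnorm G (open_legs G) (contract G Ts) * kappa_a G Ts"

text \<open>Vectorization: a fixed (arbitrary) enumeration of the index set; the spectral
  norm of the environment matrix does not depend on this choice.\<close>
definition idx_enum :: "'e tn_graph \<Rightarrow> 'e set \<Rightarrow> nat \<Rightarrow> ('e \<Rightarrow> nat)" where
  "idx_enum G S = (SOME f. bij_betw f {..<card (idx G S)} (idx G S))"

definition tvec :: "'e tn_graph \<Rightarrow> 'e set \<Rightarrow> 'e tensor \<Rightarrow> real vec" where
  "tvec G S X = vec (card (idx G S)) (\<lambda>k. X (idx_enum G S k))"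

definition unit_tensor :: "'e tn_graph \<Rightarrow> 'e set \<Rightarrow> nat \<Rightarrow> 'e tensor" where
  "unit_tensor G S c = (\<lambda>\<alpha>. if \<alpha> = idx_enum G S c then 1 else 0)"

text \<open>Environment matrix of site j: the matrix of X \<mapsto> vec(contraction with X at site j)
  acting on vec(X); column c is the image of the c-th standard basis vector.\<close>
definition env_mat :: "'e tn_graph \<Rightarrow> (nat \<Rightarrow> 'e tensor) \<Rightarrow> nat \<Rightarrow> real mat" where
  "env_mat G Ts j = mat (card (idx G (open_legs G))) (card (idx G (incident G j)))
     (\<lambda>(r, c). contract G (Ts(j := unit_tensor G (incident G j) c))
                 (idx_enum G (open_legs G) r))"

definition vnorm2 :: "real vec \<Rightarrow> real" where
  "vnorm2 v = sqrt (\<Sum>i<dim_vec v. (v $ i)\<^sup>2)"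

definition spec_norm :: "real mat \<Rightarrow> real" where
  "spec_norm A = Sup {vnorm2 (A *\<^sub>v x) / vnorm2 x | x.
                        x \<in> carrier_vec (dim_col A) \<and> x \<noteq> 0\<^sub>v (dim_col A)}"

end

theory Submission
  imports Defs "HOL-Analysis.L2_Norm"
begin

text \<open>The contraction is multilinear in the site tensors, so the error caused by a sitewise
  perturbation \<open>\<delta>\<close> is the sum over the sites \<open>i\<close> of the contraction with \<open>\<delta> i\<close> in place of
  \<open>Ts i\<close>, i.e. of \<open>M\<^sub>i vec(\<delta> i)\<close>, plus terms containing at least two perturbed factors, which
  are \<open>O(\<epsilon>\<^sup>2)\<close>.  The linear part has norm at most \<open>max\<^sub>i \<parallel>M\<^sub>i\<parallel>\<^sub>2 \<Sum>\<^sub>i \<parallel>\<delta> i\<parallel>\<^sub>F\<close>, and this is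
  nearly attained by putting the whole perturbation at a site of maximal environment norm,
  along an almost maximising vector of its environment matrix.  Hence the ratio
  \<open>sup\<^sub>\<delta> \<E>\<^sub>a(\<delta>) / \<epsilon>\<close> is within \<open>C \<epsilon>\<close> of \<open>max\<^sub>i \<parallel>M\<^sub>i\<parallel>\<^sub>2\<close> for small \<open>\<epsilon>\<close>.\<close>

lemma abs_le_L2_set: "finite A \<Longrightarrow> a \<in> A \<Longrightarrow> \<bar>f a\<bar> \<le> L2_set f A"
  using member_le_L2_set[of A a "\<lambda>x. \<bar>f x\<bar>"] by (simp add: L2_set_def)

lemma L2_set_uminus: "L2_set (\<lambda>x. - f x) A = L2_set f A"
  by (simp add: L2_set_def)

lemma L2_set_sum_le: "L2_set (\<lambda>x. \<Sum>i\<in>I. g i x) A \<le> (\<Sum>i\<in>I. L2_set (g i) A)"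
proof (induction I rule: infinite_finite_induct)
  case (insert i I)
  have "L2_set (\<lambda>x. \<Sum>i\<in>insert i I. g i x) A = L2_set (\<lambda>x. g i x + (\<Sum>i\<in>I. g i x)) A"
    using insert by simp
  also have "\<dots> \<le> L2_set (g i) A + L2_set (\<lambda>x. \<Sum>i\<in>I. g i x) A"
    by (rule L2_set_triangle_ineq)
  finally show ?case using insert by simp
qed (simp_all add: L2_set_def)

lemma prod_add_diff_le:
  fixes x y :: "nat \<Rightarrow> real"
  assumes "\<And>k. k < n \<Longrightarrow> \<bar>x k\<bar> \<le> K" "\<And>k. k < n \<Longrightarrow> \<bar>y k\<bar> \<le> 1" "0 \<le> K"
  shows "\<bar>(\<Prod>k<n. x k + y k) - (\<Prod>k<n. x k)\<bar> \<le> (\<Sum>k<n. \<bar>y k\<bar>) * (K + 1) ^ n"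
  using assms(1,2)
proof (induction n)
  case (Suc n)
  define P' where "P' = (\<Prod>k<n. x k + y k)"
  define P where "P = (\<Prod>k<n. x k)"
  define s where "s = (\<Sum>k<n. \<bar>y k\<bar>)"
  have IH: "\<bar>P' - P\<bar> \<le> s * (K + 1) ^ n" using Suc unfolding P'_def P_def s_def by simp
  have "\<bar>P\<bar> = (\<Prod>k<n. \<bar>x k\<bar>)" unfolding P_def by (simp add: abs_prod)
  also have "\<dots> \<le> (\<Prod>k<n. K)" using Suc.prems(1) by (intro prod_mono) auto
  also have "\<dots> \<le> (K + 1) ^ n" using assms(3) by (simp add: power_mono)
  finally have P: "\<bar>P\<bar> \<le> (K + 1) ^ n" .
  have xn: "\<bar>x n + y n\<bar> \<le> K + 1" and yn: "\<bar>y n\<bar> \<le> 1" using Suc.prems[of n] by auto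
  have "(\<Prod>k<Suc n. x k + y k) - (\<Prod>k<Suc n. x k) = (P' - P) * (x n + y n) + P * y n"
    by (simp add: P'_def P_def algebra_simps)
  also have "\<bar>\<dots>\<bar> \<le> \<bar>P' - P\<bar> * \<bar>x n + y n\<bar> + \<bar>P\<bar> * \<bar>y n\<bar>"
    by (metis abs_mult abs_triangle_ineq)
  also have "\<dots> \<le> (s * (K + 1) ^ n) * (K + 1) + (K + 1) ^ n * \<bar>y n\<bar>"
    using IH P xn by (intro add_mono mult_mono mult_right_mono) (auto simp: s_def sum_nonneg)
  also have "\<dots> \<le> (s + \<bar>y n\<bar>) * (K + 1) ^ Suc n"
    using assms(3) by (simp add: algebra_simps mult_right_mono)
  finally show ?case by (simp add: s_def)
qed simp

lemma prod_add_first_order_le: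
  fixes x y :: "nat \<Rightarrow> real"
  assumes "\<And>k. k < n \<Longrightarrow> \<bar>x k\<bar> \<le> K" "\<And>k. k < n \<Longrightarrow> \<bar>y k\<bar> \<le> 1" "0 \<le> K"
  shows "\<bar>(\<Prod>k<n. x k + y k) - (\<Prod>k<n. x k)
           - (\<Sum>i<n. \<Prod>k<n. if k = i then y k else x k)\<bar> \<le> (\<Sum>k<n. \<bar>y k\<bar>)\<^sup>2 * (K + 1) ^ n"
  using assms(1,2)
proof (induction n)
  case (Suc n)
  define P' where "P' = (\<Prod>k<n. x k + y k)"
  define P where "P = (\<Prod>k<n. x k)"
  define L where "L = (\<Sum>i<n. \<Prod>k<n. if k = i then y k else x k)"
  define s where "s = (\<Sum>k<n. \<bar>y k\<bar>)"
  have IH: "\<bar>P' - P - L\<bar> \<le> s\<^sup>2 * (K + 1) ^ n"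
    using Suc unfolding P'_def P_def s_def L_def by simp
  have D: "\<bar>P' - P\<bar> \<le> s * (K + 1) ^ n"
    unfolding P'_def P_def s_def by (rule prod_add_diff_le) (use Suc assms(3) in auto)
  have xn: "\<bar>x n\<bar> \<le> K" and yn: "\<bar>y n\<bar> \<le> 1" using Suc.prems[of n] by auto
  have s0: "0 \<le> s" unfolding s_def by (simp add: sum_nonneg)
  have "(\<Sum>i<Suc n. \<Prod>k<Suc n. if k = i then y k else x k) = L * x n + P * y n"
  proof -
    have "(\<Prod>k<n. if k = n then y k else x k) = P" unfolding P_def by (rule prod.cong) auto
    then show ?thesis by (simp add: L_def sum_distrib_right)
  qed
  then have "(\<Prod>k<Suc n. x k + y k) - (\<Prod>k<Suc n. x k)
           - (\<Sum>i<Suc n. \<Prod>k<Suc n. if k = i then y k else x k) = (P' - P - L) * x n + (P' - P) * y n"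
    by (simp add: P'_def P_def algebra_simps)
  also have "\<bar>\<dots>\<bar> \<le> \<bar>P' - P - L\<bar> * \<bar>x n\<bar> + \<bar>P' - P\<bar> * \<bar>y n\<bar>"
    by (metis abs_mult abs_triangle_ineq)
  also have "\<dots> \<le> (s\<^sup>2 * (K + 1) ^ n) * (K + 1) + (s * (K + 1) ^ n) * (\<bar>y n\<bar> * (K + 1))"
    using IH D xn assms(3) s0 by (intro add_mono mult_mono) (auto simp: mult_le_cancel_left1)
  also have "\<dots> = (s\<^sup>2 + s * \<bar>y n\<bar>) * (K + 1) ^ Suc n" by (simp add: algebra_simps)
  also have "\<dots> \<le> (s + \<bar>y n\<bar>)\<^sup>2 * (K + 1) ^ Suc n"
    using s0 assms(3) by (intro mult_right_mono) (auto simp: power2_eq_square algebra_simps)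
  finally show ?case by (simp add: s_def)
qed simp

section \<open>The spectral norm\<close>

lemma vnorm2_L2_set: "vnorm2 v = L2_set (\<lambda>i. v $ i) {..<dim_vec v}"
  by (simp add: vnorm2_def L2_set_def)

lemma vnorm2_zero_vec [simp]: "vnorm2 (0\<^sub>v n) = 0"
  by (simp add: vnorm2_def)

lemma vnorm2_smult: "vnorm2 (c \<cdot>\<^sub>v v) = \<bar>c\<bar> * vnorm2 v"
  by (simp add: vnorm2_def power_mult_distrib sum_distrib_left[symmetric] real_sqrt_mult)

lemma vnorm2_pos:
  assumes "x \<in> carrier_vec n" "x \<noteq> 0\<^sub>v n" shows "0 < vnorm2 x"
proof -
  obtain i where "i < n" "x $ i \<noteq> 0"
    using assms by (metis carrier_vecD eq_vecI index_zero_vec)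
  then have "vnorm2 x \<noteq> 0"
    using assms L2_set_eq_0_iff[of "{..<dim_vec x}" "\<lambda>i. x $ i"] by (auto simp: vnorm2_L2_set)
  then show ?thesis by (simp add: vnorm2_L2_set less_le)
qed

text \<open>A crude bound, enough to see that the ratios defining \<^const>\<open>spec_norm\<close> are bounded.\<close>

lemma vnorm2_mult_mat_vec_le:
  fixes A :: "real mat"
  assumes x: "x \<in> carrier_vec (dim_col A)"
  shows "vnorm2 (A *\<^sub>v x) \<le> (\<Sum>r<dim_row A. \<Sum>c<dim_col A. \<bar>A $$ (r, c)\<bar>) * vnorm2 x"
proof -
  have "\<bar>(A *\<^sub>v x) $ r\<bar> \<le> (\<Sum>c<dim_col A. \<bar>A $$ (r, c)\<bar>) * vnorm2 x" if r: "r < dim_row A" for r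
  proof -
    have "(A *\<^sub>v x) $ r = (\<Sum>c<dim_col A. A $$ (r, c) * x $ c)"
      using r x by (auto simp: scalar_prod_def atLeast0LessThan intro!: sum.cong)
    also have "\<bar>\<dots>\<bar> \<le> (\<Sum>c<dim_col A. \<bar>A $$ (r, c)\<bar> * \<bar>x $ c\<bar>)"
      by (rule order_trans[OF sum_abs]) (simp add: abs_mult)
    also have "\<dots> \<le> (\<Sum>c<dim_col A. \<bar>A $$ (r, c)\<bar> * vnorm2 x)"
      using x by (intro sum_mono mult_left_mono) (auto simp: vnorm2_L2_set intro: abs_le_L2_set)
    finally show ?thesis by (simp add: sum_distrib_right)
  qed
  then have "(\<Sum>r<dim_row A. \<bar>(A *\<^sub>v x) $ r\<bar>) \<le> (\<Sum>r<dim_row A. (\<Sum>c<dim_col A. \<bar>A $$ (r, c)\<bar>) * vnorm2 x)"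
    by (intro sum_mono) auto
  moreover have "vnorm2 (A *\<^sub>v x) \<le> (\<Sum>r<dim_row A. \<bar>(A *\<^sub>v x) $ r\<bar>)"
    unfolding vnorm2_L2_set dim_mult_mat_vec by (rule L2_set_le_sum_abs)
  ultimately show ?thesis by (simp add: sum_distrib_right)
qed

definition spec_ratios :: "real mat \<Rightarrow> real set" where
  "spec_ratios A = {vnorm2 (A *\<^sub>v x) / vnorm2 x | x.
                      x \<in> carrier_vec (dim_col A) \<and> x \<noteq> 0\<^sub>v (dim_col A)}"

lemma spec_norm_eq_Sup: "spec_norm A = Sup (spec_ratios A)"
  by (simp add: spec_norm_def spec_ratios_def)

lemma bdd_above_spec_ratios: "bdd_above (spec_ratios A)"
proof (rule bdd_aboveI)
  fix y assume "y \<in> spec_ratios A"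
  then obtain x where x: "y = vnorm2 (A *\<^sub>v x) / vnorm2 x" "x \<in> carrier_vec (dim_col A)"
    "x \<noteq> 0\<^sub>v (dim_col A)" unfolding spec_ratios_def by blast
  then show "y \<le> (\<Sum>r<dim_row A. \<Sum>c<dim_col A. \<bar>A $$ (r, c)\<bar>)"
    using vnorm2_mult_mat_vec_le[OF x(2)] vnorm2_pos[OF x(2,3)] by (simp add: divide_le_eq)
qed

lemma spec_ratios_nonempty: "0 < dim_col A \<Longrightarrow> spec_ratios A \<noteq> {}"
  unfolding spec_ratios_def
  by (auto intro!: exI[of _ "unit_vec (dim_col A) 0"] simp: vec_eq_iff)

lemma vnorm2_mult_le_spec_norm:
  fixes A :: "real mat"
  assumes x: "x \<in> carrier_vec (dim_col A)"
  shows "vnorm2 (A *\<^sub>v x) \<le> spec_norm A * vnorm2 x"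
proof (cases "x = 0\<^sub>v (dim_col A)")
  case True
  then have "A *\<^sub>v x = 0\<^sub>v (dim_row A)" by (auto simp: scalar_prod_def)
  with True show ?thesis by simp
next
  case False
  then have "vnorm2 (A *\<^sub>v x) / vnorm2 x \<le> spec_norm A"
    unfolding spec_norm_eq_Sup using x bdd_above_spec_ratios
    by (intro cSup_upper) (auto simp: spec_ratios_def)
  then show ?thesis using vnorm2_pos[OF x False] by (simp add: divide_le_eq)
qed

lemma spec_norm_nonneg: "0 < dim_col A \<Longrightarrow> 0 \<le> spec_norm A"
proof -
  assume "0 < dim_col A"
  then obtain y where "y \<in> spec_ratios A" using spec_ratios_nonempty by blast
  moreover have "0 \<le> y" using \<open>y \<in> spec_ratios A\<close>
    by (auto simp: spec_ratios_def vnorm2_L2_set)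
  ultimately show ?thesis
    unfolding spec_norm_eq_Sup by (rule cSup_upper2[OF _ _ bdd_above_spec_ratios])
qed

lemma spec_norm_almost_attained:
  fixes A :: "real mat"
  assumes "0 < dim_col A" "0 < \<eta>" "0 < r"
  obtains x where "x \<in> carrier_vec (dim_col A)" "vnorm2 x = r"
    "(spec_norm A - \<eta>) * r \<le> vnorm2 (A *\<^sub>v x)"
proof -
  have "spec_norm A - \<eta> < Sup (spec_ratios A)" using assms(2) by (simp add: spec_norm_eq_Sup)
  then obtain y where "y \<in> spec_ratios A" "spec_norm A - \<eta> < y"
    using spec_ratios_nonempty[OF assms(1)] by (blast elim: less_cSupE)
  then obtain z where z: "z \<in> carrier_vec (dim_col A)" "z \<noteq> 0\<^sub>v (dim_col A)"
    "spec_norm A - \<eta> < vnorm2 (A *\<^sub>v z) / vnorm2 z" unfolding spec_ratios_def by blast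
  define c where "c = r / vnorm2 z"
  have c: "0 < c" using assms(3) vnorm2_pos[OF z(1,2)] by (simp add: c_def)
  have "(spec_norm A - \<eta>) * r = c * ((spec_norm A - \<eta>) * vnorm2 z)"
    using vnorm2_pos[OF z(1,2)] by (simp add: c_def)
  also have "\<dots> \<le> c * vnorm2 (A *\<^sub>v z)"
    using z(3) vnorm2_pos[OF z(1,2)] c by (simp add: less_divide_eq)
  also have "\<dots> = vnorm2 (A *\<^sub>v (c \<cdot>\<^sub>v z))"
    using mult_mat_vec[OF carrier_matI[OF refl refl] z(1), of c] c by (simp add: vnorm2_smult)
  finally show ?thesis
    using that[of "c \<cdot>\<^sub>v z"] z(1) vnorm2_pos[OF z(1,2)] assms(3) by (simp add: vnorm2_smult c_def)
qed

lemma finite_idx: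
  assumes "finite S" shows "finite (idx G S)"
proof -
  define N where "N = (\<Sum>e\<in>S. dim G e)"
  have "\<alpha> e < N" if "\<alpha> \<in> idx G S" "e \<in> S" for \<alpha> e
  proof -
    have "dim G e \<le> N" unfolding N_def using assms \<open>e \<in> S\<close> by (intro member_le_sum) auto
    then show ?thesis using that unfolding idx_def by force
  qed
  then have "idx G S \<subseteq> {f. \<forall>e. (e \<in> S \<longrightarrow> f e \<in> {..<N}) \<and> (e \<notin> S \<longrightarrow> f e = 0)}"
    by (auto simp: idx_def)
  moreover have "finite {f. \<forall>e. (e \<in> S \<longrightarrow> f e \<in> {..<N}) \<and> (e \<notin> S \<longrightarrow> f e = (0::nat))}"
    by (rule finite_set_of_finite_funs) (use assms in auto)
  ultimately show ?thesis by (rule finite_subset)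
qed

lemma bij_betw_idx_enum:
  assumes "finite S" shows "bij_betw (idx_enum G S) {..<card (idx G S)} (idx G S)"
proof -
  have "\<exists>f. bij_betw f {..<card (idx G S)} (idx G S)"
    using ex_bij_betw_nat_finite[OF finite_idx[OF assms]] by (simp add: atLeast0LessThan)
  then show ?thesis unfolding idx_enum_def by (rule someI_ex)
qed

lemma sum_idx_enum:
  assumes "finite S"
  shows "(\<Sum>c<card (idx G S). h (idx_enum G S c)) = (\<Sum>\<alpha>\<in>idx G S. h \<alpha>)"
  using sum.reindex_bij_betw[OF bij_betw_idx_enum[OF assms]] by simp

lemma fnorm_L2_set: "fnorm G S X = L2_set X (idx G S)"
  by (simp add: fnorm_def L2_set_def)

lemma vnorm2_tvec:
  assumes "finite S" shows "vnorm2 (tvec G S X) = fnorm G S X"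
  unfolding vnorm2_def tvec_def fnorm_def using sum_idx_enum[OF assms, where G = G and h = "\<lambda>\<alpha>. (X \<alpha>)\<^sup>2"]
  by simp

lemma tvec_surj:
  assumes "finite S" and x: "x \<in> carrier_vec (card (idx G S))"
  obtains X where "is_tensor G S X" "tvec G S X = x"
proof
  let ?m = "card (idx G S)" and ?en = "idx_enum G S"
  have bij: "bij_betw ?en {..<?m} (idx G S)" by (rule bij_betw_idx_enum[OF assms(1)])
  define X where "X = (\<lambda>\<alpha>. if \<alpha> \<in> idx G S then x $ inv_into {..<?m} ?en \<alpha> else 0)"
  show "is_tensor G S X" by (simp add: is_tensor_def X_def)
  show "tvec G S X = x"
  proof (rule eq_vecI)
    fix k assume "k < dim_vec x"
    then have k: "k < ?m" using x by auto
    then have "?en k \<in> idx G S" "inv_into {..<?m} ?en (?en k) = k"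
      using bij by (auto simp: bij_betw_def)
    then show "tvec G S X $ k = x $ k" using k by (simp add: tvec_def X_def)
  qed (use x in \<open>simp add: tvec_def\<close>)
qed

section \<open>Sitewise multilinearity of the contraction\<close>

lemma tnet_finite_incident: "tnet G Ts \<Longrightarrow> finite (incident G i)"
  unfolding tnet_def incident_def by auto

lemma tnet_finite_open_legs: "tnet G Ts \<Longrightarrow> finite (open_legs G)"
  unfolding tnet_def open_legs_def by auto

lemma tnet_card_idx_incident_pos: "tnet G Ts \<Longrightarrow> 0 < card (idx G (incident G i))"
  using finite_idx[OF tnet_finite_incident] card_gt_0_iff
  by (fastforce simp: tnet_def incident_def idx_def)

definition site_idx :: "'e tn_graph \<Rightarrow> nat \<Rightarrow> ('e \<Rightarrow> nat) \<Rightarrow> ('e \<Rightarrow> nat) \<Rightarrow> ('e \<Rightarrow> nat)" where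
  "site_idx G j \<beta> \<gamma> = restrict_idx (incident G j) (\<lambda>e. if e \<in> open_legs G then \<beta> e else \<gamma> e)"

definition env_coeff ::
  "'e tn_graph \<Rightarrow> (nat \<Rightarrow> 'e tensor) \<Rightarrow> nat \<Rightarrow> ('e \<Rightarrow> nat) \<Rightarrow> ('e \<Rightarrow> nat) \<Rightarrow> real" where
  "env_coeff G Ts i \<beta> \<gamma> = (\<Prod>k\<in>{..<nverts G} - {i}. Ts k (site_idx G k \<beta> \<gamma>))"

lemma contract_eq:
  "\<beta> \<in> idx G (open_legs G) \<Longrightarrow>
     contract G Xs \<beta> = (\<Sum>\<gamma>\<in>idx G (contracted G). \<Prod>j<nverts G. Xs j (site_idx G j \<beta> \<gamma>))"
  by (simp add: contract_def site_idx_def)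

lemma site_idx_in_idx:
  assumes "\<beta> \<in> idx G (open_legs G)" "\<gamma> \<in> idx G (contracted G)"
  shows "site_idx G i \<beta> \<gamma> \<in> idx G (incident G i)"
  using assms
  unfolding idx_def site_idx_def restrict_idx_def incident_def open_legs_def contracted_def
  by auto

lemma contract_fun_upd:
  assumes "i < nverts G" "\<beta> \<in> idx G (open_legs G)"
  shows "contract G (Ts(i := X)) \<beta> =
           (\<Sum>\<gamma>\<in>idx G (contracted G). X (site_idx G i \<beta> \<gamma>) * env_coeff G Ts i \<beta> \<gamma>)"
proof -
  have "(\<Prod>j<nverts G. (Ts(i := X)) j (site_idx G j \<beta> \<gamma>)) =
          X (site_idx G i \<beta> \<gamma>) * env_coeff G Ts i \<beta> \<gamma>" for \<gamma>
  proof -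
    have "(\<Prod>j<nverts G. (Ts(i := X)) j (site_idx G j \<beta> \<gamma>)) =
            (Ts(i := X)) i (site_idx G i \<beta> \<gamma>) *
            (\<Prod>j\<in>{..<nverts G} - {i}. (Ts(i := X)) j (site_idx G j \<beta> \<gamma>))"
      using assms(1) by (intro prod.remove) auto
    also have "(\<Prod>j\<in>{..<nverts G} - {i}. (Ts(i := X)) j (site_idx G j \<beta> \<gamma>)) = env_coeff G Ts i \<beta> \<gamma>"
      unfolding env_coeff_def by (rule prod.cong) auto
    finally show ?thesis by simp
  qed
  then show ?thesis using assms(2) by (simp add: contract_eq)
qed

lemma env_mat_mult_tvec:
  assumes tn: "tnet G Ts" and i: "i < nverts G"
  shows "env_mat G Ts i *\<^sub>v tvec G (incident G i) X = tvec G (open_legs G) (contract G (Ts(i := X)))"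
proof (rule eq_vecI)
  let ?m = "card (idx G (incident G i))" and ?en = "idx_enum G (incident G i)"
  let ?Q = "env_coeff G Ts i" and ?a = "site_idx G i"
  fix r assume "r < dim_vec (tvec G (open_legs G) (contract G (Ts(i := X))))"
  then have r: "r < card (idx G (open_legs G))" by (simp add: tvec_def)
  define \<beta> where "\<beta> = idx_enum G (open_legs G) r"
  have \<beta>: "\<beta> \<in> idx G (open_legs G)" unfolding \<beta>_def
    using bij_betw_idx_enum[OF tnet_finite_open_legs[OF tn]] r by (auto simp: bij_betw_def)
  have sum_unit: "(\<Sum>c<?m. (if ?a \<beta> \<gamma> = ?en c then X (?en c) else 0)) = X (?a \<beta> \<gamma>)"
    if "\<gamma> \<in> idx G (contracted G)" for \<gamma>
  proof -
    have "(\<Sum>c<?m. (if ?a \<beta> \<gamma> = ?en c then X (?en c) else 0)) =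
            (\<Sum>\<alpha>\<in>idx G (incident G i). if ?a \<beta> \<gamma> = \<alpha> then X \<alpha> else 0)"
      by (rule sum_idx_enum[OF tnet_finite_incident[OF tn]])
    then show ?thesis
      using site_idx_in_idx[OF \<beta> that, of i] finite_idx[OF tnet_finite_incident[OF tn]] by simp
  qed
  have "(env_mat G Ts i *\<^sub>v tvec G (incident G i) X) $ r
      = (\<Sum>c<?m. contract G (Ts(i := unit_tensor G (incident G i) c)) \<beta> * X (?en c))"
    using r by (simp add: env_mat_def tvec_def scalar_prod_def atLeast0LessThan \<beta>_def)
  also have "\<dots> = (\<Sum>c<?m. \<Sum>\<gamma>\<in>idx G (contracted G).
                    (if ?a \<beta> \<gamma> = ?en c then X (?en c) else 0) * ?Q \<beta> \<gamma>)"
    by (auto simp: contract_fun_upd[OF i \<beta>] unit_tensor_def sum_distrib_right intro!: sum.cong)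
  also have "\<dots> = (\<Sum>\<gamma>\<in>idx G (contracted G). X (?a \<beta> \<gamma>) * ?Q \<beta> \<gamma>)"
    by (subst sum.swap) (simp add: sum_distrib_right[symmetric] sum_unit)
  also have "\<dots> = tvec G (open_legs G) (contract G (Ts(i := X))) $ r"
    using r by (simp add: tvec_def \<beta>_def[symmetric] contract_fun_upd[OF i \<beta>])
  finally show "(env_mat G Ts i *\<^sub>v tvec G (incident G i) X) $ r = \<dots>" .
qed (simp add: env_mat_def tvec_def)

lemma fnorm_contract_fun_upd_le:
  assumes tn: "tnet G Ts" and i: "i < nverts G"
  shows "fnorm G (open_legs G) (contract G (Ts(i := X)))
           \<le> spec_norm (env_mat G Ts i) * fnorm G (incident G i) X"
proof -
  have "tvec G (incident G i) X \<in> carrier_vec (dim_col (env_mat G Ts i))"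
    by (simp add: env_mat_def tvec_def)
  then show ?thesis
    using vnorm2_mult_le_spec_norm
    by (metis env_mat_mult_tvec[OF tn i] vnorm2_tvec tnet_finite_open_legs[OF tn]
              tnet_finite_incident[OF tn])
qed

lemma spec_norm_env_mat_nonneg: "tnet G Ts \<Longrightarrow> 0 \<le> spec_norm (env_mat G Ts i)"
  by (rule spec_norm_nonneg) (simp add: env_mat_def tnet_card_idx_incident_pos)

section \<open>First-order expansion of the error\<close>

definition err_linear :: "'e tn_graph \<Rightarrow> (nat \<Rightarrow> 'e tensor) \<Rightarrow> (nat \<Rightarrow> 'e tensor) \<Rightarrow> 'e tensor" where
  "err_linear G Ts \<delta> = (\<lambda>\<beta>. \<Sum>i<nverts G. contract G (Ts(i := \<delta> i)) \<beta>)"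

definition err_remainder ::
  "'e tn_graph \<Rightarrow> (nat \<Rightarrow> 'e tensor) \<Rightarrow> (nat \<Rightarrow> 'e tensor) \<Rightarrow> 'e tensor" where
  "err_remainder G Ts \<delta> =
     (\<lambda>\<beta>. contract G (\<lambda>i \<alpha>. Ts i \<alpha> + \<delta> i \<alpha>) \<beta> - contract G Ts \<beta> - err_linear G Ts \<delta> \<beta>)"

definition entry_bound :: "'e tn_graph \<Rightarrow> (nat \<Rightarrow> 'e tensor) \<Rightarrow> real" where
  "entry_bound G Ts = (\<Sum>i<nverts G. \<Sum>\<alpha>\<in>idx G (incident G i). \<bar>Ts i \<alpha>\<bar>)"

definition remainder_const :: "'e tn_graph \<Rightarrow> (nat \<Rightarrow> 'e tensor) \<Rightarrow> real" where
  "remainder_const G Ts = real (card (idx G (open_legs G))) * real (card (idx G (contracted G)))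
                            * (entry_bound G Ts + 1) ^ nverts G"

lemma abs_err_eq_L2_set:
  "abs_err G Ts \<delta> = L2_set (\<lambda>\<beta>. err_linear G Ts \<delta> \<beta> + err_remainder G Ts \<delta> \<beta>) (idx G (open_legs G))"
  by (simp add: abs_err_def err_remainder_def fnorm_L2_set)

lemma fnorm_nonneg: "0 \<le> fnorm G S X"
  by (simp add: fnorm_L2_set)

lemma entry_bound_nonneg: "0 \<le> entry_bound G Ts"
  unfolding entry_bound_def by (intro sum_nonneg) auto

lemma abs_le_entry_bound:
  assumes tn: "tnet G Ts" and i: "i < nverts G" and \<alpha>: "\<alpha> \<in> idx G (incident G i)"
  shows "\<bar>Ts i \<alpha>\<bar> \<le> entry_bound G Ts"
proof -
  have "\<bar>Ts i \<alpha>\<bar> \<le> (\<Sum>\<alpha>\<in>idx G (incident G i). \<bar>Ts i \<alpha>\<bar>)"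
    using \<alpha> finite_idx[OF tnet_finite_incident[OF tn]] by (intro member_le_sum) auto
  also have "\<dots> \<le> entry_bound G Ts" unfolding entry_bound_def
    using i by (intro member_le_sum[where f = "\<lambda>i. \<Sum>\<alpha>\<in>idx G (incident G i). \<bar>Ts i \<alpha>\<bar>"] sum_nonneg) auto
  finally show ?thesis .
qed

lemma sum_fnorm_le_of_S_eps:
  "\<delta> \<in> S_eps G \<epsilon> \<Longrightarrow> (\<Sum>i<nverts G. fnorm G (incident G i) (\<delta> i)) \<le> \<epsilon>"
  by (simp add: S_eps_def)

lemma fnorm_le_of_S_eps:
  assumes "\<delta> \<in> S_eps G \<epsilon>" "i < nverts G"
  shows "fnorm G (incident G i) (\<delta> i) \<le> \<epsilon>"
proof -
  have "fnorm G (incident G i) (\<delta> i) \<le> (\<Sum>i<nverts G. fnorm G (incident G i) (\<delta> i))"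
    using assms(2) by (intro member_le_sum fnorm_nonneg) auto
  then show ?thesis using sum_fnorm_le_of_S_eps[OF assms(1)] by simp
qed

lemma err_remainder_eq_sum:
  assumes "\<beta> \<in> idx G (open_legs G)"
  shows "err_remainder G Ts \<delta> \<beta> = (\<Sum>\<gamma>\<in>idx G (contracted G).
           (\<Prod>k<nverts G. Ts k (site_idx G k \<beta> \<gamma>) + \<delta> k (site_idx G k \<beta> \<gamma>))
           - (\<Prod>k<nverts G. Ts k (site_idx G k \<beta> \<gamma>))
           - (\<Sum>i<nverts G. \<Prod>k<nverts G.
                if k = i then \<delta> k (site_idx G k \<beta> \<gamma>) else Ts k (site_idx G k \<beta> \<gamma>)))"
proof -
  have "err_linear G Ts \<delta> \<beta> = (\<Sum>i<nverts G. \<Sum>\<gamma>\<in>idx G (contracted G). \<Prod>k<nverts G.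
          if k = i then \<delta> k (site_idx G k \<beta> \<gamma>) else Ts k (site_idx G k \<beta> \<gamma>))"
    unfolding err_linear_def using assms by (auto simp: contract_eq intro!: sum.cong prod.cong)
  then show ?thesis
    unfolding err_remainder_def contract_eq[OF assms]
    by (simp add: sum.swap[of _ "{..<nverts G}"] sum_subtractf)
qed

lemma abs_err_remainder_le:
  assumes tn: "tnet G Ts" and \<delta>: "\<delta> \<in> S_eps G \<epsilon>" and "\<epsilon> \<le> 1"
    and \<beta>: "\<beta> \<in> idx G (open_legs G)"
  shows "\<bar>err_remainder G Ts \<delta> \<beta>\<bar>
           \<le> real (card (idx G (contracted G))) * (\<epsilon>\<^sup>2 * (entry_bound G Ts + 1) ^ nverts G)"
proof -
  let ?n = "nverts G" and ?K = "entry_bound G Ts" and ?\<Gamma> = "idx G (contracted G)"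
  let ?x = "\<lambda>\<gamma> k. Ts k (site_idx G k \<beta> \<gamma>)" and ?y = "\<lambda>\<gamma> k. \<delta> k (site_idx G k \<beta> \<gamma>)"
  define E where "E \<gamma> = (\<Prod>k<?n. ?x \<gamma> k + ?y \<gamma> k) - (\<Prod>k<?n. ?x \<gamma> k)
                         - (\<Sum>i<?n. \<Prod>k<?n. if k = i then ?y \<gamma> k else ?x \<gamma> k)" for \<gamma>
  have "err_remainder G Ts \<delta> \<beta> = (\<Sum>\<gamma>\<in>?\<Gamma>. E \<gamma>)"
    unfolding E_def by (rule err_remainder_eq_sum[OF \<beta>])
  also have "\<bar>\<dots>\<bar> \<le> (\<Sum>\<gamma>\<in>?\<Gamma>. \<epsilon>\<^sup>2 * (?K + 1) ^ ?n)"
  proof (rule order_trans[OF sum_abs sum_mono])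
    fix \<gamma> assume \<gamma>: "\<gamma> \<in> ?\<Gamma>"
    have y_le: "\<bar>?y \<gamma> k\<bar> \<le> fnorm G (incident G k) (\<delta> k)" for k
      unfolding fnorm_L2_set
      by (rule abs_le_L2_set[OF finite_idx[OF tnet_finite_incident[OF tn]] site_idx_in_idx[OF \<beta> \<gamma>]])
    have "\<bar>E \<gamma>\<bar> \<le> (\<Sum>k<?n. \<bar>?y \<gamma> k\<bar>)\<^sup>2 * (?K + 1) ^ ?n"
      unfolding E_def
    proof (rule prod_add_first_order_le[OF _ _ entry_bound_nonneg])
      fix k assume "k < ?n"
      then show "\<bar>?x \<gamma> k\<bar> \<le> ?K" by (rule abs_le_entry_bound[OF tn _ site_idx_in_idx[OF \<beta> \<gamma>]])
      show "\<bar>?y \<gamma> k\<bar> \<le> 1" using y_le[of k] fnorm_le_of_S_eps[OF \<delta> \<open>k < ?n\<close>] assms(3) by linarith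
    qed
    also have "\<dots> \<le> \<epsilon>\<^sup>2 * (?K + 1) ^ ?n"
    proof (intro mult_right_mono power_mono)
      have "(\<Sum>k<?n. \<bar>?y \<gamma> k\<bar>) \<le> (\<Sum>k<?n. fnorm G (incident G k) (\<delta> k))"
        by (rule sum_mono) (rule y_le)
      then show "(\<Sum>k<?n. \<bar>?y \<gamma> k\<bar>) \<le> \<epsilon>" using sum_fnorm_le_of_S_eps[OF \<delta>] by linarith
    qed (use entry_bound_nonneg[of G Ts] in \<open>auto simp: sum_nonneg\<close>)
    finally show "\<bar>E \<gamma>\<bar> \<le> \<epsilon>\<^sup>2 * (?K + 1) ^ ?n" .
  qed
  finally show ?thesis by simp
qed

lemma fnorm_err_remainder_le:
  assumes "tnet G Ts" "\<delta> \<in> S_eps G \<epsilon>" "\<epsilon> \<le> 1"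
  shows "fnorm G (open_legs G) (err_remainder G Ts \<delta>) \<le> remainder_const G Ts * \<epsilon>\<^sup>2"
proof -
  have "fnorm G (open_legs G) (err_remainder G Ts \<delta>)
          \<le> (\<Sum>\<beta>\<in>idx G (open_legs G). \<bar>err_remainder G Ts \<delta> \<beta>\<bar>)"
    unfolding fnorm_L2_set by (rule L2_set_le_sum_abs)
  also have "\<dots> \<le> real (card (idx G (open_legs G))) * (real (card (idx G (contracted G)))
                    * (\<epsilon>\<^sup>2 * (entry_bound G Ts + 1) ^ nverts G))"
    by (rule sum_bounded_above) (rule abs_err_remainder_le[OF assms])
  finally show ?thesis by (simp add: remainder_const_def algebra_simps)
qed

section \<open>Bounds on the worst-case error\<close>

definition max_env_norm :: "'e tn_graph \<Rightarrow> (nat \<Rightarrow> 'e tensor) \<Rightarrow> real" where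
  "max_env_norm G Ts = (MAX i\<in>{..<nverts G}. spec_norm (env_mat G Ts i))"

lemma spec_norm_env_mat_le_max: "i < nverts G \<Longrightarrow> spec_norm (env_mat G Ts i) \<le> max_env_norm G Ts"
  unfolding max_env_norm_def by (rule Max_ge) auto

lemma max_env_norm_attained:
  assumes "tnet G Ts"
  obtains i where "i < nverts G" "spec_norm (env_mat G Ts i) = max_env_norm G Ts"
proof -
  have "max_env_norm G Ts \<in> (\<lambda>i. spec_norm (env_mat G Ts i)) ` {..<nverts G}"
    unfolding max_env_norm_def using assms by (intro Max_in) (auto simp: tnet_def)
  then show ?thesis using that by auto
qed

lemma max_env_norm_nonneg: "tnet G Ts \<Longrightarrow> 0 \<le> max_env_norm G Ts"
  using spec_norm_env_mat_nonneg[of G Ts 0] spec_norm_env_mat_le_max[of 0 G Ts]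
  by (auto simp: tnet_def)

lemma fnorm_err_linear_le:
  assumes tn: "tnet G Ts" and \<delta>: "\<delta> \<in> S_eps G \<epsilon>"
  shows "fnorm G (open_legs G) (err_linear G Ts \<delta>) \<le> max_env_norm G Ts * \<epsilon>"
proof -
  have "fnorm G (open_legs G) (err_linear G Ts \<delta>)
          \<le> (\<Sum>i<nverts G. fnorm G (open_legs G) (contract G (Ts(i := \<delta> i))))"
    unfolding fnorm_L2_set err_linear_def by (rule L2_set_sum_le)
  also have "\<dots> \<le> (\<Sum>i<nverts G. max_env_norm G Ts * fnorm G (incident G i) (\<delta> i))"
  proof (rule sum_mono)
    fix i assume i: "i \<in> {..<nverts G}"
    have "fnorm G (open_legs G) (contract G (Ts(i := \<delta> i)))
            \<le> spec_norm (env_mat G Ts i) * fnorm G (incident G i) (\<delta> i)"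
      using fnorm_contract_fun_upd_le[OF tn, of i "\<delta> i"] i by simp
    also have "\<dots> \<le> max_env_norm G Ts * fnorm G (incident G i) (\<delta> i)"
      using spec_norm_env_mat_le_max[of i G Ts] i by (intro mult_right_mono fnorm_nonneg) auto
    finally show "fnorm G (open_legs G) (contract G (Ts(i := \<delta> i)))
                 \<le> max_env_norm G Ts * fnorm G (incident G i) (\<delta> i)" .
  qed
  also have "\<dots> = max_env_norm G Ts * (\<Sum>i<nverts G. fnorm G (incident G i) (\<delta> i))"
    by (simp add: sum_distrib_left)
  also have "\<dots> \<le> max_env_norm G Ts * \<epsilon>"
    using sum_fnorm_le_of_S_eps[OF \<delta>] max_env_norm_nonneg[OF tn] by (rule mult_left_mono)
  finally show ?thesis .
qed

lemma abs_err_le: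
  assumes "tnet G Ts" "\<delta> \<in> S_eps G \<epsilon>" "\<epsilon> \<le> 1"
  shows "abs_err G Ts \<delta> \<le> max_env_norm G Ts * \<epsilon> + remainder_const G Ts * \<epsilon>\<^sup>2"
proof -
  have "abs_err G Ts \<delta> \<le> fnorm G (open_legs G) (err_linear G Ts \<delta>)
                           + fnorm G (open_legs G) (err_remainder G Ts \<delta>)"
    unfolding abs_err_eq_L2_set fnorm_L2_set by (rule L2_set_triangle_ineq)
  then show ?thesis
    using fnorm_err_linear_le[OF assms(1,2)] fnorm_err_remainder_le[OF assms] by linarith
qed

lemma fnorm_err_linear_le_abs_err:
  "fnorm G (open_legs G) (err_linear G Ts \<delta>)
     \<le> abs_err G Ts \<delta> + fnorm G (open_legs G) (err_remainder G Ts \<delta>)"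
proof -
  let ?B = "idx G (open_legs G)"
  have "fnorm G (open_legs G) (err_linear G Ts \<delta>) = L2_set (\<lambda>\<beta>.
          (err_linear G Ts \<delta> \<beta> + err_remainder G Ts \<delta> \<beta>) + - err_remainder G Ts \<delta> \<beta>) ?B"
    by (simp add: fnorm_L2_set)
  also have "\<dots> \<le> L2_set (\<lambda>\<beta>. err_linear G Ts \<delta> \<beta> + err_remainder G Ts \<delta> \<beta>) ?B
                  + L2_set (\<lambda>\<beta>. - err_remainder G Ts \<delta> \<beta>) ?B"
    by (rule L2_set_triangle_ineq)
  also have "\<dots> = abs_err G Ts \<delta> + fnorm G (open_legs G) (err_remainder G Ts \<delta>)"
    by (simp only: abs_err_eq_L2_set fnorm_L2_set L2_set_uminus)
  finally show ?thesis .
qed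

lemma err_linear_single_site:
  assumes "i0 < nverts G" "\<beta> \<in> idx G (open_legs G)"
  shows "err_linear G Ts (\<lambda>i. if i = i0 then X else (\<lambda>_. 0)) \<beta> = contract G (Ts(i0 := X)) \<beta>"
proof -
  have "contract G (Ts(i := (if i = i0 then X else (\<lambda>_. 0)))) \<beta>
          = (if i = i0 then contract G (Ts(i0 := X)) \<beta> else 0)" if "i < nverts G" for i
    using that by (simp add: contract_fun_upd[OF _ assms(2)])
  then show ?thesis using assms(1) by (simp add: err_linear_def)
qed

lemma abs_err_almost_max:
  assumes tn: "tnet G Ts" and "0 < \<epsilon>" "\<epsilon> \<le> 1" "0 < \<eta>"
  obtains \<delta> where "\<delta> \<in> S_eps G \<epsilon>"
    "(max_env_norm G Ts - \<eta>) * \<epsilon> - remainder_const G Ts * \<epsilon>\<^sup>2 \<le> abs_err G Ts \<delta>"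
proof -
  obtain i0 where i0: "i0 < nverts G" "spec_norm (env_mat G Ts i0) = max_env_norm G Ts"
    using max_env_norm_attained[OF tn] by blast
  let ?M = "env_mat G Ts i0" and ?S = "incident G i0"
  have dim_M: "dim_col ?M = card (idx G ?S)" by (simp add: env_mat_def)
  obtain x where x: "x \<in> carrier_vec (card (idx G ?S))" "vnorm2 x = \<epsilon>"
    "(max_env_norm G Ts - \<eta>) * \<epsilon> \<le> vnorm2 (?M *\<^sub>v x)"
    using spec_norm_almost_attained[of ?M \<eta> \<epsilon>] assms(2,4) i0(2) dim_M
      tnet_card_idx_incident_pos[OF tn] by auto
  obtain X where X: "is_tensor G ?S X" "tvec G ?S X = x"
    using tvec_surj[OF tnet_finite_incident[OF tn] x(1)] by blast
  define \<delta> where "\<delta> = (\<lambda>i. if i = i0 then X else (\<lambda>_. 0))"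
  have "(\<Sum>i<nverts G. fnorm G (incident G i) (\<delta> i)) = (\<Sum>i<nverts G. if i = i0 then fnorm G ?S X else 0)"
    by (rule sum.cong) (auto simp: \<delta>_def fnorm_def)
  also have "\<dots> = \<epsilon>"
    using i0(1) x(2) X(2) vnorm2_tvec[OF tnet_finite_incident[OF tn, of i0], of G X] by simp
  finally have \<delta>_S: "\<delta> \<in> S_eps G \<epsilon>"
    using X(1) unfolding S_eps_def perturbations_def by (auto simp: \<delta>_def is_tensor_def)
  have "fnorm G (open_legs G) (err_linear G Ts \<delta>) = fnorm G (open_legs G) (contract G (Ts(i0 := X)))"
    unfolding fnorm_L2_set \<delta>_def using i0(1) by (simp add: err_linear_single_site cong: L2_set_cong)
  also have "\<dots> = vnorm2 (?M *\<^sub>v x)"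
    by (simp add: X(2)[symmetric] env_mat_mult_tvec[OF tn i0(1)] vnorm2_tvec[OF tnet_finite_open_legs[OF tn]])
  finally have "vnorm2 (?M *\<^sub>v x) \<le> abs_err G Ts \<delta> + fnorm G (open_legs G) (err_remainder G Ts \<delta>)"
    using fnorm_err_linear_le_abs_err by metis
  then show ?thesis
    using that[OF \<delta>_S] x(3) fnorm_err_remainder_le[OF tn \<delta>_S assms(3)] by linarith
qed

lemma SUP_abs_err_ratio_near_max:
  assumes tn: "tnet G Ts" and e: "0 < \<epsilon>" "\<epsilon> \<le> 1"
  shows "\<bar>(SUP \<delta>\<in>S_eps G \<epsilon>. abs_err G Ts \<delta> / \<epsilon>) - max_env_norm G Ts\<bar> \<le> remainder_const G Ts * \<epsilon>"
proof -
  let ?L = "max_env_norm G Ts" and ?C = "remainder_const G Ts"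
  let ?f = "\<lambda>\<delta>. abs_err G Ts \<delta> / \<epsilon>"
  have upper: "?f \<delta> \<le> ?L + ?C * \<epsilon>" if "\<delta> \<in> S_eps G \<epsilon>" for \<delta>
    using abs_err_le[OF tn that e(2)] e(1) by (simp add: divide_le_eq power2_eq_square algebra_simps)
  have "(\<lambda>_ _. 0) \<in> S_eps G \<epsilon>"
    using e(1) by (simp add: S_eps_def perturbations_def is_tensor_def fnorm_def)
  then have nonempty: "S_eps G \<epsilon> \<noteq> {}" by blast
  have "?L - ?C * \<epsilon> \<le> (SUP \<delta>\<in>S_eps G \<epsilon>. ?f \<delta>)"
  proof (rule field_le_epsilon)
    fix \<eta> :: real assume "0 < \<eta>"
    then obtain \<delta> where \<delta>: "\<delta> \<in> S_eps G \<epsilon>" "(?L - \<eta>) * \<epsilon> - ?C * \<epsilon>\<^sup>2 \<le> abs_err G Ts \<delta>"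
      using abs_err_almost_max[OF tn e] by blast
    then have "?L - \<eta> - ?C * \<epsilon> \<le> ?f \<delta>"
      using e(1) by (simp add: le_divide_eq power2_eq_square algebra_simps)
    also have "\<dots> \<le> (SUP \<delta>\<in>S_eps G \<epsilon>. ?f \<delta>)"
      using upper by (intro cSUP_upper[OF \<delta>(1)] bdd_aboveI2)
    finally show "?L - ?C * \<epsilon> \<le> (SUP \<delta>\<in>S_eps G \<epsilon>. ?f \<delta>) + \<eta>" by linarith
  qed
  moreover have "(SUP \<delta>\<in>S_eps G \<epsilon>. ?f \<delta>) \<le> ?L + ?C * \<epsilon>"
    using upper by (rule cSUP_least[OF nonempty])
  ultimately show ?thesis by linarith
qed

lemma tendsto_at_right_0_linear_squeeze:
  fixes f :: "real \<Rightarrow> real"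
  assumes "0 < d" and "\<And>\<epsilon>. 0 < \<epsilon> \<Longrightarrow> \<epsilon> \<le> d \<Longrightarrow> \<bar>f \<epsilon> - L\<bar> \<le> C * \<epsilon>"
  shows "(f \<longlongrightarrow> L) (at_right 0)"
proof (rule tendsto_sandwich)
  have near: "eventually (\<lambda>\<epsilon>. \<bar>f \<epsilon> - L\<bar> \<le> C * \<epsilon>) (at_right 0)"
    using assms by (intro eventually_at_rightI[of 0 d]) auto
  show "eventually (\<lambda>\<epsilon>. L - C * \<epsilon> \<le> f \<epsilon>) (at_right 0)"
    using near by eventually_elim linarith
  show "eventually (\<lambda>\<epsilon>. f \<epsilon> \<le> L + C * \<epsilon>) (at_right 0)"
    using near by eventually_elim linarith
  show "((\<lambda>\<epsilon>. L - C * \<epsilon>) \<longlongrightarrow> L) (at_right 0)"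
    using tendsto_diff[OF tendsto_const tendsto_mult_right_zero[OF tendsto_ident_at, of C]] by simp
  show "((\<lambda>\<epsilon>. L + C * \<epsilon>) \<longlongrightarrow> L) (at_right 0)"
    using tendsto_add[OF tendsto_const tendsto_mult_right_zero[OF tendsto_ident_at, of C]] by simp
qed

theorem mainTheorem2:
  fixes G :: "'e tn_graph" and Ts :: "nat \<Rightarrow> 'e tensor"
  assumes "tnet G Ts"
    and "contract G Ts \<noteq> (\<lambda>_. 0)"
  shows "((\<lambda>\<epsilon>. SUP \<delta>\<in>S_eps G \<epsilon>. abs_err G Ts \<delta> / \<epsilon>)
            \<longlongrightarrow> (MAX i\<in>{..<nverts G}. spec_norm (env_mat G Ts i))) (at_right 0)
       \<and> kappa_a G Ts = (MAX i\<in>{..<nverts G}. spec_norm (env_mat G Ts i))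
       \<and> kappa_r G Ts = (\<Sum>i<nverts G. fnorm G (incident G i) (Ts i))
                          / fnorm G (open_legs G) (contract G Ts)
                          * (MAX i\<in>{..<nverts G}. spec_norm (env_mat G Ts i))"
proof -
  have lim: "((\<lambda>\<epsilon>. SUP \<delta>\<in>S_eps G \<epsilon>. abs_err G Ts \<delta> / \<epsilon>) \<longlongrightarrow> max_env_norm G Ts) (at_right 0)"
    by (rule tendsto_at_right_0_linear_squeeze[of 1])
       (auto intro: SUP_abs_err_ratio_near_max[OF assms(1)])
  then have "kappa_a G Ts = max_env_norm G Ts"
    unfolding kappa_a_def by (rule tendsto_Lim[OF trivial_limit_at_right_real])
  with lim show ?thesis by (simp add: kappa_r_def max_env_norm_def)
qed

end
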